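(* Let $\{\mathcal S,\mathcal C,\mathcal R\}$ be a reaction network with $d$ species and reactions $\nu_k\to\nu_k'$, $k=1,\dots,m$, and let $\kappa_k>0$ be rate constants. Suppose the deterministic mass-action system $$\dot x=\sum_{k}\kappa_k x^{\nu_k}(\nu_k'-\nu_k)$$ is complex balanced, i.e. it admits a complex balanced equilibrium in $\mathbb{R}^d_{>0}$. For $V>0$ put $\kappa_k^V=\kappa_k/V^{|\nu_k|-1}$. Let $V\to\infty$ along an increasing sequence. Let $\tilde x^V\in\frac1V\mathbb{Z}^d_{\ge0}$ be points with $\lim_{V\to\infty}\tilde x^V=\tilde x\in\mathbb{R}^d_{>0}$. Let $c\in\mathbb{R}^d_{>0}$ be the unique complex balanced equilibrium in the positive stoichiometric compatibility class $(\tilde x+S)\cap\mathbb{R}^d_{>0}$. Define $$\mathcal V(x)=\sum_{i=1}^d\big[x_i(\ln x_i-\ln c_i-1)+c_i\big],\qquad x\in\mathbb{R}^d_{>0}.$$ (a) Let $$\pi^V(x)=\prod_{i=1}^d\frac{(Vc_i)^{x_i}}{x_i!}e^{-Vc_i},\qquad x\in\mathbb{Z}^d_{\ge0},$$ and let $\tilde\pi^V(\tilde w)=\pi^V(V\tilde w)$ for $\tilde w\in\frac1V\mathbb{Z}^d_{\ge0}$. Then $$\lim_{V\to\infty}\Big[-\tfrac1V\ln\tilde\pi^V(\tilde x^V)\Big]=\mathcal V(\tilde x).$$ (b) For each $V$, let $\Gamma^V\subset\mathbb{Z}^d_{\ge0}$ be an irreducible closed component of the state space of the stochastic mass-action Markov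 chain with rate constants $\kappa_k^V$, chosen so that $V\tilde x^V\in\Gamma^V$. Let $$\pi^V_{\Gamma^V}(x)=\frac{1}{Z^V_{\Gamma^V}}\prod_{i=1}^d\frac{(Vc_i)^{x_i}}{x_i!}e^{-Vc_i}\quad (x\in\Gamma^V),$$ where $Z^V_{\Gamma^V}>0$ is the normalizing constant making this a probability distribution on $\Gamma^V$. Define $\tilde\pi^V_{\Gamma^V}(\tilde w)=\pi^V_{\Gamma^V}(V\tilde w)$ for $\tilde w\in\frac1V\Gamma^V$. Then $$\lim_{V\to\infty}\tfrac1V\ln Z^V_{\Gamma^V}=0 \qquad\text{and}\qquad \lim_{V\to\infty}\Big[-\tfrac1V\ln\tilde\pi^V_{\Gamma^V}(\tilde x^V)\Big]=\mathcal V(\tilde x).$$ (c) $\mathcal V$ is a Lyapunov function at $c$ on the positive stoichiometric compatibility class $E=(c+S)\cap\mathbb{R}^d_{>0}$, where $f(x)=\sum_k\kappa_kx^{\nu_k}(\nu_k'-\nu_k)$. Precisely: - $\mathcal V(c)=0$; - $\mathcal V(x)>0$ for all $x\in E$ with $x\neq c$; - $\nabla\mathcal V(x)\cdot f(x)\le0$ for all $x\in E$, with equality if and only if $x=c$.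
   Context: Notation: for $u,v\in\mathbb{R}^d_{\ge0}$, $u^v=\prod_iu_i^{v_i}$ with $0^0=1$, and $|\nu_k|=\sum_i\nu_{ki}$. A reaction network consists of species $S_1,\dots,S_d$ and reactions $\nu_k\to\nu_k'$ with $\nu_k,\nu_k'\in\mathbb{Z}^d_{\ge0}$ (the complexes). The stoichiometric subspace is $S=\mathrm{span}\{\nu_k'-\nu_k\}$, and a positive stoichiometric compatibility class is a set $(y+S)\cap\mathbb{R}^d_{>0}$. An equilibrium $c$ of the deterministic mass-action system is complex balanced if for every complex $z$, $$\sum_{k:\nu_k'=z}\kappa_kc^{\nu_k}=\sum_{k:\nu_k=z}\kappa_kc^{\nu_k}.$$ It is known (Horn–Jackson) that if one positive complex balanced equilibrium exists, then each positive stoichiometric compatibility class contains exactly one positive equilibrium, and it is complex balanced. The stochastic mass-action model with rate constants $\kappa^V_k$ is the continuous-time Markov chain on $\mathbb{Z}^d_{\ge0}$ that jumps from $x$ to $x+\nu_k'-\nu_k$ with intensity $$\lambda_k^V(x)=\kappa_k^V\prod_{i}\frac{x_i!}{(x_i-\nu_{ki})!}\mathbf 1_{\{x_i\ge\nu_{ki}\}}.$$ A closed irreducible component is a subset closed under the chain's transitions in which every state is reachable from every other. *)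

theory Defs
  imports "HOL-Analysis.Analysis"
begin

text \<open>Species are indexed by a finite type 'i (so d = CARD('i));
  reactions are indexed by k < m, reaction k being nu k \<rightarrow> nu' k.\<close>

definition monom :: "('i::finite \<Rightarrow> real) \<Rightarrow> ('i \<Rightarrow> nat) \<Rightarrow> real" where
  "monom x v = (\<Prod>i\<in>UNIV. x i ^ v i)"

definition cplx_size :: "('i::finite \<Rightarrow> nat) \<Rightarrow> nat" where
  "cplx_size v = (\<Sum>i\<in>UNIV. v i)"

definition stoich_subspace ::
  "nat \<Rightarrow> (nat \<Rightarrow> 'i::finite \<Rightarrow> nat) \<Rightarrow> (nat \<Rightarrow> 'i \<Rightarrow> nat) \<Rightarrow> ('i \<Rightarrow> real) set" where
  "stoich_subspace m nu nu' =
     {v. \<exists>a::nat \<Rightarrow> real. v = (\<lambda>i. \<Sum>k<m. a k * (real (nu' k i) - real (nu k i)))}"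

definition mass_action_field ::
  "nat \<Rightarrow> (nat \<Rightarrow> 'i::finite \<Rightarrow> nat) \<Rightarrow> (nat \<Rightarrow> 'i \<Rightarrow> nat) \<Rightarrow> (nat \<Rightarrow> real)
     \<Rightarrow> ('i \<Rightarrow> real) \<Rightarrow> ('i \<Rightarrow> real)" where
  "mass_action_field m nu nu' kappa x =
     (\<lambda>i. \<Sum>k<m. kappa k * monom x (nu k) * (real (nu' k i) - real (nu k i)))"

text \<open>Complex balanced equilibrium (the balance condition for every complex z;
  it is trivial for z not a complex).\<close>
definition complex_balanced ::
  "nat \<Rightarrow> (nat \<Rightarrow> 'i::finite \<Rightarrow> nat) \<Rightarrow> (nat \<Rightarrow> 'i \<Rightarrow> nat) \<Rightarrow> (nat \<Rightarrow> real)
     \<Rightarrow> ('i \<Rightarrow> real) \<Rightarrow> bool" where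
  "complex_balanced m nu nu' kappa c \<longleftrightarrow>
     (\<forall>z. (\<Sum>k\<in>{k. k < m \<and> nu' k = z}. kappa k * monom c (nu k))
        = (\<Sum>k\<in>{k. k < m \<and> nu k = z}. kappa k * monom c (nu k)))"

definition stoch_intensity ::
  "(nat \<Rightarrow> 'i::finite \<Rightarrow> nat) \<Rightarrow> (nat \<Rightarrow> real) \<Rightarrow> nat \<Rightarrow> ('i \<Rightarrow> nat) \<Rightarrow> real" where
  "stoch_intensity nu kappaV k x =
     kappaV k * (\<Prod>i\<in>UNIV. if nu k i \<le> x i then fact (x i) / fact (x i - nu k i) else 0)"

definition stoch_step ::
  "nat \<Rightarrow> (nat \<Rightarrow> 'i::finite \<Rightarrow> nat) \<Rightarrow> (nat \<Rightarrow> 'i \<Rightarrow> nat) \<Rightarrow> (nat \<Rightarrow> real)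
     \<Rightarrow> ('i \<Rightarrow> nat) \<Rightarrow> ('i \<Rightarrow> nat) \<Rightarrow> bool" where
  "stoch_step m nu nu' kappaV x y \<longleftrightarrow>
     (\<exists>k<m. stoch_intensity nu kappaV k x > 0 \<and> y = (\<lambda>i. x i - nu k i + nu' k i))"

definition closed_irreducible_component ::
  "nat \<Rightarrow> (nat \<Rightarrow> 'i::finite \<Rightarrow> nat) \<Rightarrow> (nat \<Rightarrow> 'i \<Rightarrow> nat) \<Rightarrow> (nat \<Rightarrow> real)
     \<Rightarrow> ('i \<Rightarrow> nat) set \<Rightarrow> bool" where
  "closed_irreducible_component m nu nu' kappaV G \<longleftrightarrow>
     G \<noteq> {} \<and>
     (\<forall>x\<in>G. \<forall>y. stoch_step m nu nu' kappaV x y \<longrightarrow> y \<in> G) \<and>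
     (\<forall>x\<in>G. \<forall>y\<in>G. (stoch_step m nu nu' kappaV)\<^sup>*\<^sup>* x y)"

definition scaled_rates :: "(nat \<Rightarrow> 'i::finite \<Rightarrow> nat) \<Rightarrow> (nat \<Rightarrow> real) \<Rightarrow> real \<Rightarrow> nat \<Rightarrow> real" where
  "scaled_rates nu kappa V k = kappa k / V powr (real (cplx_size (nu k)) - 1)"

definition lyap :: "('i::finite \<Rightarrow> real) \<Rightarrow> ('i \<Rightarrow> real) \<Rightarrow> real" where
  "lyap c x = (\<Sum>i\<in>UNIV. x i * (ln (x i) - ln (c i) - 1) + c i)"

definition prod_poisson :: "('i::finite \<Rightarrow> real) \<Rightarrow> real \<Rightarrow> ('i \<Rightarrow> nat) \<Rightarrow> real" where
  "prod_poisson c V x = (\<Prod>i\<in>UNIV. (V * c i) ^ x i / fact (x i) * exp (- V * c i))"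

definition grad :: "(('i::finite \<Rightarrow> real) \<Rightarrow> real) \<Rightarrow> ('i \<Rightarrow> real) \<Rightarrow> ('i \<Rightarrow> real)" where
  "grad F x = (\<lambda>i. deriv (\<lambda>t. F (x(i := t))) (x i))"

end

theory Submission
  imports Defs
begin

text \<open>
  (a) By Stirling's bounds \<open>ln y! = y ln y - y + O(ln y)\<close>, minus the logarithm of the Poisson
  weight \<open>(V c)^y e^(-V c) / y!\<close> at \<open>y \<approx> V z\<close> is \<open>V (z (ln z - ln c - 1) + c) + O(ln V)\<close>;
  summing over the species gives \<open>V \<V>(z)\<close>.

  (b) The product-Poisson measure has total mass \<open>1\<close>, so \<open>Z \<le> 1\<close>, and \<open>Z\<close> is at least the
  weight of any state of \<open>\<Gamma>\<close>. A state of \<open>\<Gamma>\<close> near \<open>V c\<close> exists: in a closed irreducible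
  component every reaction can be undone by a nonnegative combination of reactions (fire it, then
  walk back), so far from the boundary any integer combination of reaction vectors can be fired.
  As \<open>c - xt\<close> lies in the stoichiometric subspace, walking in short stages along the segment
  from \<open>V xt\<close> to \<open>V c\<close>, which stays at distance of order \<open>V\<close> from the boundary, reaches a state
  \<open>Y\<close> of \<open>\<Gamma>\<close> with \<open>Y / V \<rightarrow> c\<close>. Since \<open>\<V>(c) = 0\<close>, this gives \<open>ln Z / V \<rightarrow> 0\<close>.

  (c) With \<open>\<mu> = ln x - ln c\<close> and \<open>a(v) = \<langle>\<mu>, v\<rangle>\<close>, the dissipation is
  \<open>\<Sum>\<^sub>k \<kappa>\<^sub>k c^\<nu>\<^sub>k e^a(\<nu>\<^sub>k) (a(\<nu>'\<^sub>k) - a(\<nu>\<^sub>k))\<close>. Convexity of \<open>exp\<close> bounds it by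
  \<open>\<Sum>\<^sub>k \<kappa>\<^sub>k c^\<nu>\<^sub>k (e^a(\<nu>'\<^sub>k) - e^a(\<nu>\<^sub>k))\<close>, which vanishes by complex balance. Equality
  forces \<open>\<mu>\<close> to be orthogonal to the stoichiometric subspace, so \<open>\<langle>ln x - ln c, x - c\<rangle> = 0\<close>,
  and monotonicity of \<open>ln\<close> gives \<open>x = c\<close>.
\<close>

section \<open>Poisson weights\<close>

lemma ln_Suc_diff_bounds:
  assumes "n \<ge> (1::nat)"
  shows "real n * (ln (real n + 1) - ln (real n)) \<le> 1"
    and "(real n + 1) * (ln (real n + 1) - ln (real n)) \<ge> 1"
proof -
  have n: "real n > 0" using assms by simp
  have "ln ((real n + 1) / real n) \<le> (real n + 1) / real n - 1"
    using n by (intro ln_le_minus_one) simp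
  then show "real n * (ln (real n + 1) - ln (real n)) \<le> 1"
    using n by (simp add: ln_div field_simps)
  have "ln (real n / (real n + 1)) \<le> real n / (real n + 1) - 1"
    using n by (intro ln_le_minus_one) simp
  then show "(real n + 1) * (ln (real n + 1) - ln (real n)) \<ge> 1"
    using n by (simp add: ln_div field_simps)
qed

lemma ln_fact_bounds:
  assumes "n \<ge> (1::nat)"
  shows "real n * ln (real n) - real n \<le> ln (fact n)"
    and "ln (fact n) \<le> real n * ln (real n) - real n + 1 + ln (real n)"
proof -
  have "real n * ln (real n) - real n \<le> ln (fact n) \<and>
        ln (fact n) \<le> real n * ln (real n) - real n + 1 + ln (real n)"
    using assms
  proof (induction n rule: nat_induct_at_least)
    case (Suc n)
    have "ln (fact (Suc n) :: real) = ln (real n + 1) + ln (fact n)"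
      by (simp add: ln_mult add.commute)
    with Suc.IH ln_Suc_diff_bounds[OF Suc.hyps] show ?case
      by (simp add: algebra_simps)
  qed simp
  then show "real n * ln (real n) - real n \<le> ln (fact n)"
    and "ln (fact n) \<le> real n * ln (real n) - real n + 1 + ln (real n)"
    by auto
qed

lemma ln_fact_remainder_tendsto:
  fixes V :: "nat \<Rightarrow> real" and y :: "nat \<Rightarrow> nat"
  assumes V_pos: "\<And>n. V n > 0" and V_lim: "filterlim V at_top sequentially"
    and y_lim: "(\<lambda>n. real (y n) / V n) \<longlonglongrightarrow> z" and "z > 0"
  shows "(\<lambda>n. (ln (fact (y n)) - (real (y n) * ln (real (y n)) - real (y n))) / V n) \<longlonglongrightarrow> 0"
proof (rule tendsto_sandwich[OF _ _ tendsto_const])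
  define q where "q n = real (y n) / V n" for n
  have q_lim: "q \<longlonglongrightarrow> z"
    using y_lim by (simp add: q_def[abs_def])
  have "eventually (\<lambda>n. 0 \<le> (ln (fact (y n)) - (real (y n) * ln (real (y n)) - real (y n))) / V n
      \<and> (ln (fact (y n)) - (real (y n) * ln (real (y n)) - real (y n))) / V n
        \<le> (1 + ln (q n)) / V n + ln (V n) / V n) sequentially"
    using order_tendstoD(1)[OF q_lim \<open>z > 0\<close>]
  proof eventually_elim
    case (elim n)
    then have "real (y n) > 0" and "ln (real (y n)) = ln (q n) + ln (V n)"
      using V_pos[of n] by (simp_all add: q_def zero_less_divide_iff ln_div)
    then show ?case
      using ln_fact_bounds[of "y n"] V_pos[of n]
      by (auto simp: divide_right_mono add_divide_distrib[symmetric])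
  qed
  then show "eventually (\<lambda>n. 0 \<le> (ln (fact (y n)) - (real (y n) * ln (real (y n)) - real (y n))) / V n) sequentially"
    and "eventually (\<lambda>n. (ln (fact (y n)) - (real (y n) * ln (real (y n)) - real (y n))) / V n
      \<le> (1 + ln (q n)) / V n + ln (V n) / V n) sequentially"
    by (auto elim: eventually_mono)
  have "(\<lambda>n. 1 / V n) \<longlonglongrightarrow> 0"
    using tendsto_inverse_0_at_top[OF V_lim] by (simp add: inverse_eq_divide)
  moreover have "(\<lambda>n. ln (V n) / V n) \<longlonglongrightarrow> 0"
    using ln_x_over_x_tendsto_0 V_lim by (rule filterlim_compose)
  ultimately have "(\<lambda>n. (1 + ln (q n)) * (1 / V n) + ln (V n) / V n) \<longlonglongrightarrow> (1 + ln z) * 0 + 0"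
    using q_lim \<open>z > 0\<close> by (intro tendsto_intros) auto
  then show "(\<lambda>n. (1 + ln (q n)) / V n + ln (V n) / V n) \<longlonglongrightarrow> 0"
    by simp
qed

lemma poisson_weight_log_eq:
  fixes V c :: real and y :: nat
  assumes "y > 0" and "V > 0" and "c > 0"
  shows "- (1 / V) * ln ((V * c) ^ y / fact y * exp (- V * c))
    = real y / V * (ln (real y / V) - ln c - 1) + c + (ln (fact y) - (real y * ln (real y) - real y)) / V"
proof -
  have ln_weight: "ln ((V * c) ^ y / fact y * exp (- V * c)) = real y * (ln V + ln c) - ln (fact y) - V * c"
    using assms by (simp add: ln_mult ln_div ln_realpow)
  have ln_ratio: "ln (real y / V) = ln (real y) - ln V"
    using assms by (simp add: ln_div)
  show ?thesis
    unfolding ln_weight ln_ratio using assms by (simp add: field_simps)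
qed

lemma poisson_weight_log_limit:
  fixes V :: "nat \<Rightarrow> real" and y :: "nat \<Rightarrow> nat" and z c :: real
  assumes V_pos: "\<And>n. V n > 0" and V_lim: "filterlim V at_top sequentially"
    and y_lim: "(\<lambda>n. real (y n) / V n) \<longlonglongrightarrow> z" and "z > 0" and "c > 0"
  shows "(\<lambda>n. - (1 / V n) * ln ((V n * c) ^ y n / fact (y n) * exp (- V n * c)))
           \<longlonglongrightarrow> z * (ln z - ln c - 1) + c"
proof -
  have "(\<lambda>n. real (y n) / V n * (ln (real (y n) / V n) - ln c - 1) + c
      + (ln (fact (y n)) - (real (y n) * ln (real (y n)) - real (y n))) / V n)
      \<longlonglongrightarrow> z * (ln z - ln c - 1) + c + 0"
    using y_lim \<open>z > 0\<close> ln_fact_remainder_tendsto[OF V_pos V_lim y_lim \<open>z > 0\<close>]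
    by (intro tendsto_intros) auto
  moreover have "eventually (\<lambda>n. real (y n) / V n * (ln (real (y n) / V n) - ln c - 1) + c
      + (ln (fact (y n)) - (real (y n) * ln (real (y n)) - real (y n))) / V n
      = - (1 / V n) * ln ((V n * c) ^ y n / fact (y n) * exp (- V n * c))) sequentially"
    using order_tendstoD(1)[OF y_lim \<open>z > 0\<close>]
  proof eventually_elim
    case (elim n)
    then have "y n > 0"
      using V_pos[of n] by (simp add: zero_less_divide_iff)
    then show ?case
      by (rule poisson_weight_log_eq[OF _ V_pos \<open>c > 0\<close>, symmetric])
  qed
  ultimately have "(\<lambda>n. - (1 / V n) * ln ((V n * c) ^ y n / fact (y n) * exp (- V n * c)))
      \<longlonglongrightarrow> z * (ln z - ln c - 1) + c + 0"
    by (rule Lim_transform_eventually)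
  then show ?thesis
    by simp
qed

lemma has_sum_poisson:
  fixes l :: real
  assumes "l \<ge> 0"
  shows "((\<lambda>k::nat. l ^ k / fact k * exp (- l)) has_sum 1) UNIV"
proof -
  have "(\<lambda>k. l ^ k / fact k) sums exp l"
    using exp_converges[of l] by (simp add: divide_inverse mult.commute)
  then have "(\<lambda>k. l ^ k / fact k * exp (- l)) sums (exp l * exp (- l))"
    by (rule sums_mult2)
  then show ?thesis
    using assms by (intro sums_nonneg_imp_has_sum) (auto simp: exp_minus)
qed

lemma has_sum_prod_poisson:
  assumes "V \<ge> 0" and "\<And>i. c i \<ge> 0"
  shows "(prod_poisson c V has_sum 1) UNIV"
proof -
  define p where "p i k = (V * c i) ^ k / fact k * exp (- V * c i)" for i k
  have p_has_sum: "(p i has_sum 1) UNIV" for i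
    unfolding p_def using has_sum_poisson[of "V * c i"] assms by simp
  have "infsum (\<lambda>x. \<Prod>i\<in>UNIV. p i (x i)) (PiE UNIV (\<lambda>_. UNIV)) = (\<Prod>i\<in>UNIV. infsum (p i) UNIV)"
  proof (rule infsum_prod_PiE_abs)
    fix i
    have "(\<lambda>k. norm (p i k)) = p i"
      using assms by (auto simp: p_def fun_eq_iff)
    then show "(\<lambda>k. norm (p i k)) summable_on UNIV"
      using p_has_sum[of i] by (simp add: has_sum_imp_summable)
  qed simp
  moreover have "prod_poisson c V = (\<lambda>x. \<Prod>i\<in>UNIV. p i (x i))"
    by (simp add: prod_poisson_def p_def fun_eq_iff)
  moreover have "infsum (p i) UNIV = 1" for i
    using p_has_sum by (rule infsumI)
  ultimately have "infsum (prod_poisson c V) UNIV = 1"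
    by simp
  moreover from this have "prod_poisson c V summable_on UNIV"
    using infsum_not_exists by fastforce
  ultimately show ?thesis
    by (simp add: summable_iff_has_sum_infsum)
qed

lemma prod_poisson_pos:
  assumes "V > 0" and "\<And>i. c i > 0"
  shows "prod_poisson c V x > 0"
  unfolding prod_poisson_def using assms by (intro prod_pos) simp

lemma prod_poisson_nonneg:
  assumes "V \<ge> 0" and "\<And>i. c i \<ge> 0"
  shows "prod_poisson c V x \<ge> 0"
  unfolding prod_poisson_def using assms by (intro prod_nonneg) simp

lemma prod_poisson_summable_on:
  assumes "V \<ge> 0" and "\<And>i. c i \<ge> 0"
  shows "prod_poisson c V summable_on A"
  using has_sum_imp_summable[OF has_sum_prod_poisson[OF assms]] by (rule summable_on_subset_banach) simp

lemma prod_poisson_le_infsum: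
  assumes "x \<in> A" and "V \<ge> 0" and "\<And>i. c i \<ge> 0"
  shows "prod_poisson c V x \<le> infsum (prod_poisson c V) A"
proof -
  have "infsum (prod_poisson c V) {x} \<le> infsum (prod_poisson c V) A"
    using assms by (intro infsum_mono2 prod_poisson_summable_on prod_poisson_nonneg) auto
  then show ?thesis
    by simp
qed

lemma infsum_prod_poisson_le_1:
  assumes "V \<ge> 0" and "\<And>i. c i \<ge> 0"
  shows "infsum (prod_poisson c V) A \<le> 1"
proof -
  have "infsum (prod_poisson c V) A \<le> infsum (prod_poisson c V) UNIV"
    using assms by (intro infsum_mono2 prod_poisson_summable_on prod_poisson_nonneg) auto
  also have "\<dots> = 1"
    using has_sum_prod_poisson[OF assms] by (rule infsumI)
  finally show ?thesis .
qed

lemma ln_prod_poisson_div_infsum: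
  assumes "x \<in> A" and "V > 0" and "\<And>i. c i > 0"
  shows "ln (prod_poisson c V x / infsum (prod_poisson c V) A)
    = ln (prod_poisson c V x) - ln (infsum (prod_poisson c V) A)"
proof (rule ln_divide_pos)
  show "0 < prod_poisson c V x"
    using assms(2,3) by (rule prod_poisson_pos)
  also have "prod_poisson c V x \<le> infsum (prod_poisson c V) A"
    using assms by (intro prod_poisson_le_infsum) (auto intro: less_imp_le)
  finally show "0 < infsum (prod_poisson c V) A" .
qed

lemma lyap_self [simp]: "lyap c c = 0"
  by (simp add: lyap_def)

lemma prod_poisson_log_limit:
  fixes V :: "nat \<Rightarrow> real" and Y :: "nat \<Rightarrow> 'i::finite \<Rightarrow> nat"
  assumes V_pos: "\<And>n. V n > 0" and V_lim: "filterlim V at_top sequentially"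
    and Y_lim: "\<And>i. (\<lambda>n. real (Y n i) / V n) \<longlonglongrightarrow> z i"
    and z_pos: "\<And>i. z i > 0" and c_pos: "\<And>i. c i > 0"
  shows "(\<lambda>n. - (1 / V n) * ln (prod_poisson c (V n) (Y n))) \<longlonglongrightarrow> lyap c z"
proof -
  have "- (1 / V n) * ln (prod_poisson c (V n) (Y n)) =
      (\<Sum>i\<in>UNIV. - (1 / V n) * ln ((V n * c i) ^ Y n i / fact (Y n i) * exp (- V n * c i)))" for n
    unfolding prod_poisson_def sum_distrib_left[symmetric]
    using V_pos[of n] c_pos by (subst ln_prod) (auto simp: less_imp_neq[symmetric])
  then show ?thesis
    unfolding lyap_def using poisson_weight_log_limit[OF V_pos V_lim Y_lim z_pos c_pos]
    by (simp add: tendsto_sum)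
qed

lemma infsum_prod_poisson_log_limit:
  fixes V :: "nat \<Rightarrow> real" and Y :: "nat \<Rightarrow> 'i::finite \<Rightarrow> nat"
  assumes V_pos: "\<And>n. V n > 0" and V_lim: "filterlim V at_top sequentially"
    and c_pos: "\<And>i. c i > 0"
    and Y_in: "eventually (\<lambda>n. Y n \<in> A n) sequentially"
    and Y_lim: "\<And>i. (\<lambda>n. real (Y n i) / V n) \<longlonglongrightarrow> c i"
  shows "(\<lambda>n. 1 / V n * ln (infsum (prod_poisson c (V n)) (A n))) \<longlonglongrightarrow> 0"
proof -
  define Z where "Z n = infsum (prod_poisson c (V n)) (A n)" for n
  have V_nonneg: "V n \<ge> 0" for n
    using V_pos[of n] by simp
  have c_nonneg: "c i \<ge> 0" for i
    using c_pos[of i] by simp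
  have bounds: "eventually (\<lambda>n. 1 / V n * ln (prod_poisson c (V n) (Y n)) \<le> 1 / V n * ln (Z n) \<and>
      1 / V n * ln (Z n) \<le> 0) sequentially"
    using Y_in
  proof eventually_elim
    case (elim n)
    have "0 < prod_poisson c (V n) (Y n)"
      using V_pos c_pos by (rule prod_poisson_pos)
    moreover have "prod_poisson c (V n) (Y n) \<le> Z n"
      unfolding Z_def using elim V_nonneg c_nonneg by (rule prod_poisson_le_infsum)
    moreover have "Z n \<le> 1"
      unfolding Z_def using V_nonneg c_nonneg by (rule infsum_prod_poisson_le_1)
    ultimately show ?case
      using V_pos[of n] by (simp add: divide_right_mono divide_nonpos_pos)
  qed
  have "(\<lambda>n. 1 / V n * ln (Z n)) \<longlonglongrightarrow> 0"
  proof (rule tendsto_sandwich)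
    have "(\<lambda>n. - (- (1 / V n) * ln (prod_poisson c (V n) (Y n)))) \<longlonglongrightarrow> - lyap c c"
      by (intro tendsto_minus prod_poisson_log_limit[OF V_pos V_lim Y_lim c_pos c_pos])
    then show "(\<lambda>n. 1 / V n * ln (prod_poisson c (V n) (Y n))) \<longlonglongrightarrow> 0"
      by simp
  qed (use bounds in \<open>auto elim: eventually_mono\<close>)
  then show ?thesis
    by (simp add: Z_def)
qed

section \<open>Reachability in closed irreducible components\<close>

definition reaction_vector :: "(nat \<Rightarrow> 'i \<Rightarrow> nat) \<Rightarrow> (nat \<Rightarrow> 'i \<Rightarrow> nat) \<Rightarrow> nat \<Rightarrow> 'i \<Rightarrow> int" where
  "reaction_vector nu nu' k i = int (nu' k i) - int (nu k i)"

lemma stoich_subspace_eq: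
  "stoich_subspace m nu nu' = {v. \<exists>\<alpha>. \<forall>i. v i = (\<Sum>k<m. \<alpha> k * real_of_int (reaction_vector nu nu' k i))}"
  by (simp add: stoich_subspace_def reaction_vector_def fun_eq_iff)

lemma reaction_bounds_exist:
  fixes nu nu' :: "nat \<Rightarrow> 'i::finite \<Rightarrow> nat"
  shows "\<exists>B R. 0 \<le> R \<and> (\<forall>k<m. \<forall>i. nu k i \<le> B) \<and> (\<forall>i. (\<Sum>k<m. \<bar>reaction_vector nu nu' k i\<bar>) \<le> R)"
proof (intro exI[of _ "\<Sum>k<m. \<Sum>i\<in>UNIV. nu k i"] exI[of _ "\<Sum>k<m. \<Sum>i\<in>UNIV. \<bar>reaction_vector nu nu' k i\<bar>"]
    conjI allI impI)
  show "nu k i \<le> (\<Sum>k<m. \<Sum>i\<in>UNIV. nu k i)" if "k < m" for k i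
    using member_le_sum[of i UNIV "nu k"] member_le_sum[of k "{..<m}" "\<lambda>k. \<Sum>i\<in>UNIV. nu k i"] that by simp
  show "(\<Sum>k<m. \<bar>reaction_vector nu nu' k i\<bar>) \<le> (\<Sum>k<m. \<Sum>i\<in>UNIV. \<bar>reaction_vector nu nu' k i\<bar>)" for i
    by (intro sum_mono member_le_sum) simp_all
qed (simp add: sum_nonneg)

lemma stoch_intensity_pos_imp_le:
  assumes "stoch_intensity nu kV k x > 0"
  shows "nu k i \<le> x i"
proof (rule ccontr)
  assume "\<not> nu k i \<le> x i"
  then have zero: "(\<Prod>i\<in>UNIV. if nu k i \<le> x i then fact (x i) / fact (x i - nu k i) else (0::real)) = 0"
    by (intro prod_zero) auto
  show False
    using assms unfolding stoch_intensity_def zero by simp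
qed

lemma stoch_intensity_pos:
  assumes "kV k > 0" and "\<And>i. nu k i \<le> x i"
  shows "stoch_intensity nu kV k x > 0"
  unfolding stoch_intensity_def using assms by (simp add: prod_pos)

lemma reachable_imp_reaction_combination:
  assumes "(stoch_step m nu nu' kV)\<^sup>*\<^sup>* x y"
  shows "\<exists>p. \<forall>i. int (y i) = int (x i) + (\<Sum>k<m. int (p k) * reaction_vector nu nu' k i)"
  using assms
proof (induction rule: rtranclp_induct)
  case base
  show ?case
    by (rule exI[of _ "\<lambda>_. 0"]) simp
next
  case (step y z)
  from step.IH obtain p where p: "\<forall>i. int (y i) = int (x i) + (\<Sum>k<m. int (p k) * reaction_vector nu nu' k i)"
    by blast
  from step.hyps(2) obtain k where k: "k < m" and pos: "stoch_intensity nu kV k y > 0"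
    and z: "z = (\<lambda>i. y i - nu k i + nu' k i)"
    unfolding stoch_step_def by blast
  have "int (z i) = int (x i) + (\<Sum>j<m. int ((p(k := Suc (p k))) j) * reaction_vector nu nu' j i)" for i
  proof -
    have "(\<Sum>j<m. int ((p(k := Suc (p k))) j) * reaction_vector nu nu' j i)
        = (\<Sum>j<m. int (p j) * reaction_vector nu nu' j i) + reaction_vector nu nu' k i"
      using k by (simp add: sum.remove[of "{..<m}" k] algebra_simps)
    then show ?thesis
      using p stoch_intensity_pos_imp_le[OF pos, of i] by (simp add: z reaction_vector_def)
  qed
  then show ?case
    by blast
qed

lemma iterate_bounded_step:
  fixes S :: "('i \<Rightarrow> int) set" and v :: "'i \<Rightarrow> int" and T R :: int
  assumes step: "\<And>z. z \<in> S \<Longrightarrow> (\<And>i. T \<le> z i) \<Longrightarrow> (\<lambda>i. z i + v i) \<in> S"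
    and bound: "\<And>i. \<bar>v i\<bar> \<le> R"
  shows "z \<in> S \<Longrightarrow> (\<And>i. T + int q * R \<le> z i) \<Longrightarrow> (\<lambda>i. z i + int q * v i) \<in> S"
proof (induction q arbitrary: z)
  case (Suc q)
  have "0 \<le> R"
    using bound[of undefined] by linarith
  then have "T \<le> z i" for i
    using Suc.prems(2)[of i] by (smt (verit) of_nat_0_le_iff zero_le_mult_iff)
  with Suc.prems(1) have "(\<lambda>i. z i + v i) \<in> S"
    by (rule step)
  moreover have "T + int q * R \<le> z i + v i" for i
    using Suc.prems(2)[of i] bound[of i] by (simp add: algebra_simps abs_le_iff)
  ultimately have "(\<lambda>i. (z i + v i) + int q * v i) \<in> S"
    by (rule Suc.IH)
  then show ?case
    by (simp add: algebra_simps)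
qed simp

lemma iterate_bounded_steps:
  fixes S :: "('i \<Rightarrow> int) set" and v :: "'j \<Rightarrow> 'i \<Rightarrow> int" and T R :: int
  assumes "finite J"
    and step: "\<And>z j. z \<in> S \<Longrightarrow> j \<in> J \<Longrightarrow> (\<And>i. T \<le> z i) \<Longrightarrow> (\<lambda>i. z i + v j i) \<in> S"
    and bound: "\<And>j i. j \<in> J \<Longrightarrow> \<bar>v j i\<bar> \<le> R"
  shows "z \<in> S \<Longrightarrow> (\<And>i. T + int (\<Sum>j\<in>J. q j) * R \<le> z i) \<Longrightarrow>
    (\<lambda>i. z i + (\<Sum>j\<in>J. int (q j) * v j i)) \<in> S"
  using \<open>finite J\<close> step bound
proof (induction J arbitrary: z rule: finite_induct)
  case (insert j J)
  have "0 \<le> R"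
    using insert.prems(4)[of j undefined] by (meson abs_ge_zero insertI1 order_trans)
  have split: "int (\<Sum>j\<in>insert j J. q j) * R = int (q j) * R + int (\<Sum>j\<in>J. q j) * R"
    using insert.hyps by (simp add: distrib_right del: of_nat_sum)
  moreover have "0 \<le> int (\<Sum>j\<in>J. q j) * R"
    using \<open>0 \<le> R\<close> by (simp del: of_nat_sum)
  ultimately have "T + int (q j) * R \<le> z i" for i
    using insert.prems(2)[of i] by linarith
  then have "(\<lambda>i. z i + int (q j) * v j i) \<in> S"
    using iterate_bounded_step[of S T "v j" R] insert.prems by blast
  moreover have "T + int (\<Sum>j\<in>J. q j) * R \<le> z i + int (q j) * v j i" for i
  proof -
    have "\<bar>int (q j) * v j i\<bar> \<le> int (q j) * R"
      using insert.prems(4)[of j i] by (simp add: abs_mult mult_left_mono)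
    then show ?thesis
      using insert.prems(2)[of i] split by (simp add: abs_le_iff)
  qed
  ultimately have "(\<lambda>i. (z i + int (q j) * v j i) + (\<Sum>j\<in>J. int (q j) * v j i)) \<in> S"
    using insert.IH[of "\<lambda>i. z i + int (q j) * v j i"] insert.prems(3,4) by blast
  then show ?case
    using insert.hyps by (simp add: add.assoc)
qed simp

lemma sum_nat_abs_floor_diff_le:
  fixes t u :: "nat \<Rightarrow> real"
  shows "real (\<Sum>k<m. nat \<bar>\<lfloor>t k\<rfloor> - \<lfloor>u k\<rfloor>\<bar>) \<le> (\<Sum>k<m. \<bar>t k - u k\<bar> + 1)"
proof -
  have "real (nat \<bar>\<lfloor>t k\<rfloor> - \<lfloor>u k\<rfloor>\<bar>) \<le> \<bar>t k - u k\<bar> + 1" for k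
    by (smt (verit, best) of_int_abs of_int_diff of_int_floor_le real_of_int_floor_add_one_gt of_nat_nat
        abs_ge_zero of_int_of_nat_eq)
  then show ?thesis
    by (simp add: sum_mono)
qed

lemma floor_mult_div_tendsto:
  fixes V :: "nat \<Rightarrow> real"
  assumes V_pos: "\<And>n. V n > 0" and V_lim: "filterlim V at_top sequentially"
  shows "(\<lambda>n. real_of_int \<lfloor>V n * a\<rfloor> / V n) \<longlonglongrightarrow> a"
proof (rule tendsto_sandwich)
  have "a - 1 / V n = (V n * a - 1) / V n" and "a = V n * a / V n" for n
    using V_pos[of n] by (simp_all add: field_simps)
  moreover have "(V n * a - 1) / V n \<le> real_of_int \<lfloor>V n * a\<rfloor> / V n"
    and "real_of_int \<lfloor>V n * a\<rfloor> / V n \<le> V n * a / V n" for n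
    using V_pos[of n] by (intro divide_right_mono; linarith)+
  ultimately show "eventually (\<lambda>n. a - 1 / V n \<le> real_of_int \<lfloor>V n * a\<rfloor> / V n) sequentially"
    and "eventually (\<lambda>n. real_of_int \<lfloor>V n * a\<rfloor> / V n \<le> a) sequentially"
    by (auto intro: always_eventually)
  have "(\<lambda>n. 1 / V n) \<longlonglongrightarrow> 0"
    using tendsto_inverse_0_at_top[OF V_lim] by (simp add: inverse_eq_divide)
  then show "(\<lambda>n. a - 1 / V n) \<longlonglongrightarrow> a"
    using tendsto_diff[OF tendsto_const] by fastforce
qed simp

lemma sum_floor_mult_ge:
  fixes t :: "nat \<Rightarrow> real" and r :: "nat \<Rightarrow> int"
  shows "(\<Sum>k<m. t k * real_of_int (r k)) - (\<Sum>k<m. real_of_int \<bar>r k\<bar>) \<le> real_of_int (\<Sum>k<m. \<lfloor>t k\<rfloor> * r k)"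
proof -
  have "t k * real_of_int (r k) - real_of_int \<bar>r k\<bar> \<le> real_of_int (\<lfloor>t k\<rfloor> * r k)" for k
  proof -
    have "\<bar>(real_of_int \<lfloor>t k\<rfloor> - t k) * real_of_int (r k)\<bar> \<le> real_of_int \<bar>r k\<bar>"
      unfolding abs_mult of_int_abs by (rule mult_left_le_one_le) linarith+
    then show ?thesis
      by (simp add: algebra_simps abs_le_iff)
  qed
  then show ?thesis
    by (simp add: sum_subtractf[symmetric] sum_mono)
qed

lemma floor_segment_point_ge:
  fixes xt c x V \<mu> \<theta> :: real and \<alpha> :: "nat \<Rightarrow> real" and r :: "nat \<Rightarrow> int"
  assumes "0 \<le> \<theta>" "\<theta> \<le> 1" "0 \<le> V" "\<mu> \<le> xt" "\<mu> \<le> c"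
    and c_eq: "c = xt + (\<Sum>k<m. \<alpha> k * real_of_int (r k))"
    and r_sum_le: "(\<Sum>k<m. \<bar>r k\<bar>) \<le> R" and x_near: "V * (xt - \<mu> / 4) \<le> x"
  shows "3 / 4 * (V * \<mu>) - real_of_int R \<le> x + real_of_int (\<Sum>k<m. \<lfloor>V * \<alpha> k * \<theta>\<rfloor> * r k)"
proof -
  have "(\<Sum>k<m. V * \<alpha> k * \<theta> * real_of_int (r k)) = V * \<theta> * (c - xt)"
    unfolding c_eq by (simp add: sum_distrib_left mult_ac)
  moreover have "(\<Sum>k<m. real_of_int \<bar>r k\<bar>) \<le> real_of_int R"
    using r_sum_le by (metis of_int_le_iff of_int_sum)
  ultimately have floor_ge: "V * \<theta> * (c - xt) - real_of_int R \<le> real_of_int (\<Sum>k<m. \<lfloor>V * \<alpha> k * \<theta>\<rfloor> * r k)"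
    using sum_floor_mult_ge[of "\<lambda>k. V * \<alpha> k * \<theta>" r m] by linarith
  have "\<mu> = (1 - \<theta>) * \<mu> + \<theta> * \<mu>"
    by (simp add: algebra_simps)
  also have "\<dots> \<le> (1 - \<theta>) * xt + \<theta> * c"
    using assms(1-5) by (intro add_mono mult_left_mono) simp_all
  finally have "V * \<mu> \<le> V * ((1 - \<theta>) * xt + \<theta> * c)"
    using \<open>0 \<le> V\<close> by (rule mult_left_mono)
  moreover have "V * (xt - \<mu> / 4) + V * \<theta> * (c - xt) = V * ((1 - \<theta>) * xt + \<theta> * c) - (V * \<mu>) / 4"
    by (simp add: algebra_simps)
  ultimately show ?thesis
    using x_near floor_ge by linarith
qed

locale closed_component =
  fixes m :: nat and nu nu' :: "nat \<Rightarrow> 'i::finite \<Rightarrow> nat" and kV :: "nat \<Rightarrow> real"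
    and G :: "('i \<Rightarrow> nat) set"
  assumes closed_irreducible: "closed_irreducible_component m nu nu' kV G"
    and rates_pos: "\<And>k. k < m \<Longrightarrow> kV k > 0"
begin

abbreviation r :: "nat \<Rightarrow> 'i \<Rightarrow> int" where
  "r \<equiv> reaction_vector nu nu'"

abbreviation int_states :: "('i \<Rightarrow> int) set" where
  "int_states \<equiv> (\<lambda>x i. int (x i)) ` G"

lemma fire_reaction:
  assumes "z \<in> int_states" and "k < m" and "\<And>i. int (nu k i) \<le> z i"
  shows "(\<lambda>i. z i + r k i) \<in> int_states"
proof -
  from assms(1) obtain x where "x \<in> G" and z: "z = (\<lambda>i. int (x i))"
    by blast
  have le: "nu k i \<le> x i" for i
    using assms(3)[of i] by (simp add: z)
  then have "stoch_step m nu nu' kV x (\<lambda>i. x i - nu k i + nu' k i)"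
    unfolding stoch_step_def using assms(2) rates_pos stoch_intensity_pos by blast
  then have fired: "(\<lambda>i. x i - nu k i + nu' k i) \<in> G"
    using closed_irreducible \<open>x \<in> G\<close> unfolding closed_irreducible_component_def by blast
  have "int (x i - nu k i + nu' k i) = z i + r k i" for i
    using le[of i] by (simp add: z reaction_vector_def)
  then show ?thesis
    by (intro rev_image_eqI[OF fired]) simp
qed

lemma reaction_reversal_exists:
  assumes "x \<in> G" and "\<And>k i. k < m \<Longrightarrow> nu k i \<le> x i"
  shows "\<exists>P. \<forall>k<m. \<forall>i. (\<Sum>j<m. int (P k j) * r j i) = - r k i"
proof -
  have "\<exists>p. \<forall>i. (\<Sum>j<m. int (p j) * r j i) = - r k i" if "k < m" for k
  proof -
    \<comment> \<open>Fire reaction \<open>k\<close> and walk back to \<open>x\<close>, which irreducibility allows; the way back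
      undoes \<open>r k\<close>.\<close>
    have "(\<lambda>i. int (x i) + r k i) \<in> int_states"
      using fire_reaction[of "\<lambda>i. int (x i)" k] assms that by auto
    then obtain y where "y \<in> G" and y: "\<And>i. int (y i) = int (x i) + r k i"
      by (auto simp: fun_eq_iff)
    then have "(stoch_step m nu nu' kV)\<^sup>*\<^sup>* y x"
      using closed_irreducible \<open>x \<in> G\<close> unfolding closed_irreducible_component_def by blast
    then obtain p where "\<forall>i. int (x i) = int (y i) + (\<Sum>j<m. int (p j) * r j i)"
      using reachable_imp_reaction_combination by blast
    then show ?thesis
      using y by (intro exI[of _ p]) (auto simp: algebra_simps eq_neg_iff_add_eq_0)
  qed
  then have "\<forall>k. \<exists>p. k < m \<longrightarrow> (\<forall>i. (\<Sum>j<m. int (p j) * r j i) = - r k i)"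
    by blast
  from choice[OF this] show ?thesis
    by blast
qed

lemma fire_nonneg_combination:
  assumes nu_le: "\<And>k i. k < m \<Longrightarrow> nu k i \<le> B" and r_le: "\<And>k i. k < m \<Longrightarrow> \<bar>r k i\<bar> \<le> R"
    and "z \<in> int_states" and "\<And>i. int B + int (\<Sum>k<m. q k) * R \<le> z i"
  shows "(\<lambda>i. z i + (\<Sum>k<m. int (q k) * r k i)) \<in> int_states"
proof (rule iterate_bounded_steps[of "{..<m}" int_states "int B" r R, OF _ _ _ assms(3,4)])
  show "(\<lambda>i. z i + r k i) \<in> int_states"
    if "z \<in> int_states" and "k \<in> {..<m}" and "\<And>i. int B \<le> z i" for z k
  proof (rule fire_reaction[OF that(1)])
    show "int (nu k i) \<le> z i" for i
      using that(2) that(3)[of i] nu_le[of k i] by force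
  qed (use that in simp)
qed (use r_le in auto)

lemma fire_reaction_backward:
  assumes nu_le: "\<And>k i. k < m \<Longrightarrow> nu k i \<le> B" and r_le: "\<And>k i. k < m \<Longrightarrow> \<bar>r k i\<bar> \<le> R"
    and reversal: "\<And>i. (\<Sum>j<m. int (P j) * r j i) = - r k i"
    and "z \<in> int_states" and "\<And>i. int B + int (\<Sum>j<m. P j) * R \<le> z i"
  shows "(\<lambda>i. z i - r k i) \<in> int_states"
  using fire_nonneg_combination[OF nu_le r_le assms(4,5)] by (simp add: reversal)

lemma fire_int_combination:
  assumes nu_le: "\<And>k i. k < m \<Longrightarrow> nu k i \<le> B" and r_le: "\<And>k i. k < m \<Longrightarrow> \<bar>r k i\<bar> \<le> R"
    and reversal: "\<And>k i. k < m \<Longrightarrow> (\<Sum>j<m. int (P k j) * r j i) = - r k i"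
    and D: "\<And>k. k < m \<Longrightarrow> int (\<Sum>j<m. P k j) * R \<le> D"
    and "z \<in> int_states" and "\<And>i. int B + D + int (\<Sum>k<m. nat \<bar>a k\<bar>) * R \<le> z i"
  shows "(\<lambda>i. z i + (\<Sum>k<m. a k * r k i)) \<in> int_states"
proof -
  \<comment> \<open>A signed combination is a nonnegative one over the forward and the reversed reactions.\<close>
  define v where "v = (\<lambda>(k, forward) i. if forward then r k i else - r k i)"
  define q where "q = (\<lambda>(k, forward). if forward then nat (a k) else nat (- a k))"
  let ?steps = "{..<m} \<times> (UNIV :: bool set)"
  have q_sum: "(\<Sum>s\<in>?steps. q s) = (\<Sum>k<m. nat \<bar>a k\<bar>)"
  proof -
    have "nat (- a k) + nat (a k) = nat \<bar>a k\<bar>" for k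
      by (simp add: abs_if)
    then show ?thesis
      by (simp add: sum.cartesian_product' UNIV_bool q_def)
  qed
  have v_sum: "(\<Sum>s\<in>?steps. int (q s) * v s i) = (\<Sum>k<m. a k * r k i)" for i
    by (simp add: sum.cartesian_product' UNIV_bool q_def v_def algebra_simps)
       (intro sum.cong; simp add: algebra_simps)
  have "(\<lambda>i. z i + (\<Sum>s\<in>?steps. int (q s) * v s i)) \<in> int_states"
  proof (rule iterate_bounded_steps[of _ _ "int B + D" _ R])
    fix z s
    assume z: "z \<in> int_states" and "s \<in> ?steps" and high: "\<And>i. int B + D \<le> z i"
    then obtain k forward where s: "s = (k, forward)" and "k < m"
      by auto
    have "0 \<le> R"
      using r_le[OF \<open>k < m\<close>, of undefined] by (meson abs_ge_zero order_trans)
    then have "0 \<le> D"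
      using D[OF \<open>k < m\<close>] by (meson of_nat_0_le_iff mult_nonneg_nonneg order_trans)
    show "(\<lambda>i. z i + v s i) \<in> int_states"
    proof (cases forward)
      case True
      have "int (nu k i) \<le> z i" for i
        using nu_le[OF \<open>k < m\<close>, of i] high[of i] \<open>0 \<le> D\<close> by linarith
      then show ?thesis
        using fire_reaction[OF z \<open>k < m\<close>] True by (simp add: s v_def)
    next
      case False
      have "int B + int (\<Sum>j<m. P k j) * R \<le> z i" for i
        using high[of i] D[OF \<open>k < m\<close>] by linarith
      then show ?thesis
        using fire_reaction_backward[OF nu_le r_le reversal[OF \<open>k < m\<close>] z] False by (simp add: s v_def)
    qed
  qed (use q_sum assms(5,6) r_le in \<open>auto simp: v_def\<close>)
  then show ?thesis
    by (simp add: v_sum)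
qed

lemma fire_floor_combination:
  assumes nu_le: "\<And>k i. k < m \<Longrightarrow> nu k i \<le> B" and r_le: "\<And>k i. k < m \<Longrightarrow> \<bar>r k i\<bar> \<le> R"
    and reversal: "\<And>k i. k < m \<Longrightarrow> (\<Sum>j<m. int (P k j) * r j i) = - r k i"
    and D: "\<And>k. k < m \<Longrightarrow> int (\<Sum>j<m. P k j) * R \<le> D"
    and "0 \<le> R" and "N > 0" and "z \<in> int_states"
    and high: "\<And>s i. s \<le> N \<Longrightarrow> real_of_int (int B + D) + (\<Sum>k<m. \<bar>\<beta> k\<bar> / real N + 1) * real_of_int R
      \<le> real_of_int (z i + (\<Sum>k<m. \<lfloor>\<beta> k * real s / real N\<rfloor> * r k i))"
  shows "(\<lambda>i. z i + (\<Sum>k<m. \<lfloor>\<beta> k\<rfloor> * r k i)) \<in> int_states"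
proof -
  \<comment> \<open>Walk along the segment in \<open>N\<close> stages, each short enough to stay in the region where
    every reaction can be undone.\<close>
  have "(\<lambda>i. z i + (\<Sum>k<m. \<lfloor>\<beta> k * real s / real N\<rfloor> * r k i)) \<in> int_states" if "s \<le> N" for s
    using that
  proof (induction s)
    case 0
    then show ?case
      using \<open>z \<in> int_states\<close> by simp
  next
    case (Suc s)
    define a where "a k = \<lfloor>\<beta> k * real (Suc s) / real N\<rfloor> - \<lfloor>\<beta> k * real s / real N\<rfloor>" for k
    have "\<beta> k * real (Suc s) / real N - \<beta> k * real s / real N = \<beta> k / real N" for k
      by (simp add: diff_divide_distrib[symmetric] algebra_simps)
    then have "real (\<Sum>k<m. nat \<bar>a k\<bar>) \<le> (\<Sum>k<m. \<bar>\<beta> k\<bar> / real N + 1)"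
      using sum_nat_abs_floor_diff_le[of "\<lambda>k. \<beta> k * real (Suc s) / real N" "\<lambda>k. \<beta> k * real s / real N" m]
      by (simp add: a_def)
    then have stage_cost: "real (\<Sum>k<m. nat \<bar>a k\<bar>) * real_of_int R \<le> (\<Sum>k<m. \<bar>\<beta> k\<bar> / real N + 1) * real_of_int R"
      using \<open>0 \<le> R\<close> by (intro mult_right_mono) simp_all
    have threshold: "int B + D + int (\<Sum>k<m. nat \<bar>a k\<bar>) * R
        \<le> z i + (\<Sum>k<m. \<lfloor>\<beta> k * real s / real N\<rfloor> * r k i)" for i
    proof -
      have "real_of_int (int B + D + int (\<Sum>k<m. nat \<bar>a k\<bar>) * R)
          = real_of_int (int B + D) + real (\<Sum>k<m. nat \<bar>a k\<bar>) * real_of_int R"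
        by simp
      then have "real_of_int (int B + D + int (\<Sum>k<m. nat \<bar>a k\<bar>) * R)
          \<le> real_of_int (z i + (\<Sum>k<m. \<lfloor>\<beta> k * real s / real N\<rfloor> * r k i))"
        using high[of s i] Suc.prems stage_cost by linarith
      then show ?thesis
        by (simp only: of_int_le_iff)
    qed
    have "(\<lambda>i. (z i + (\<Sum>k<m. \<lfloor>\<beta> k * real s / real N\<rfloor> * r k i)) + (\<Sum>k<m. a k * r k i)) \<in> int_states"
      by (rule fire_int_combination[OF nu_le r_le reversal D]) (use Suc.IH Suc.prems threshold in auto)
    then show ?case
      by (simp add: a_def algebra_simps sum.distrib sum_subtractf)
  qed
  from this[of N] show ?thesis
    using \<open>N > 0\<close> by simp
qed

lemma fire_along_segment:
  assumes nu_le: "\<And>k i. k < m \<Longrightarrow> nu k i \<le> B" and r_sum_le: "\<And>i. (\<Sum>k<m. \<bar>r k i\<bar>) \<le> R"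
    and reversal: "\<And>k i. k < m \<Longrightarrow> (\<Sum>j<m. int (P k j) * r j i) = - r k i"
    and D: "\<And>k. k < m \<Longrightarrow> int (\<Sum>j<m. P k j) * R \<le> D"
    and \<mu>_le: "\<And>i. \<mu> \<le> xt i" "\<And>i. \<mu> \<le> c i"
    and \<alpha>: "\<And>i. c i = xt i + (\<Sum>k<m. \<alpha> k * real_of_int (r k i))"
    and "N > 0" and N_large: "(\<Sum>k<m. \<bar>\<alpha> k\<bar>) * real_of_int R / real N \<le> \<mu> / 4"
    and "V > 0" and V_large: "2 * (real B + real_of_int D + real m * real_of_int R + real_of_int R) \<le> V * \<mu>"
    and "x \<in> G" and x_near: "\<And>i. V * (xt i - \<mu> / 4) \<le> real (x i)"
  shows "(\<lambda>i. int (x i) + (\<Sum>k<m. \<lfloor>V * \<alpha> k\<rfloor> * r k i)) \<in> int_states"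
proof (rule fire_floor_combination[OF nu_le _ reversal D _ \<open>N > 0\<close>])
  show r_le: "\<bar>r k i\<bar> \<le> R" if "k < m" for k i
    using member_le_sum[of k "{..<m}" "\<lambda>k. \<bar>r k i\<bar>"] r_sum_le[of i] that by simp
  show "0 \<le> R"
    by (rule order_trans[OF sum_nonneg r_sum_le]) simp
  show "(\<lambda>i. int (x i)) \<in> int_states"
    using \<open>x \<in> G\<close> by blast
  show "real_of_int (int B + D) + (\<Sum>k<m. \<bar>V * \<alpha> k\<bar> / real N + 1) * real_of_int R
      \<le> real_of_int (int (x i) + (\<Sum>k<m. \<lfloor>V * \<alpha> k * real s / real N\<rfloor> * r k i))"
    if "s \<le> N" for s i
  proof -
    have "3 / 4 * (V * \<mu>) - real_of_int R
        \<le> real (x i) + real_of_int (\<Sum>k<m. \<lfloor>V * \<alpha> k * real s / real N\<rfloor> * r k i)"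
      using floor_segment_point_ge[where \<theta> = "real s / real N" and xt = "xt i" and c = "c i"
          and r = "\<lambda>k. r k i" and x = "real (x i)"] that \<open>N > 0\<close> \<open>V > 0\<close> \<mu>_le \<alpha> r_sum_le x_near
      by simp
    moreover have "(\<Sum>k<m. \<bar>V * \<alpha> k\<bar> / real N + 1) * real_of_int R
        = V * ((\<Sum>k<m. \<bar>\<alpha> k\<bar>) * real_of_int R / real N) + real m * real_of_int R"
      using \<open>V > 0\<close> by (simp add: sum.distrib abs_mult sum_divide_distrib[symmetric]
          sum_distrib_left[symmetric] algebra_simps)
    moreover have "V * ((\<Sum>k<m. \<bar>\<alpha> k\<bar>) * real_of_int R / real N) \<le> (V * \<mu>) / 4"
      using mult_left_mono[OF N_large, of V] \<open>V > 0\<close> by simp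
    ultimately have "real B + real_of_int D + (\<Sum>k<m. \<bar>V * \<alpha> k\<bar> / real N + 1) * real_of_int R
        \<le> real (x i) + real_of_int (\<Sum>k<m. \<lfloor>V * \<alpha> k * real s / real N\<rfloor> * r k i)"
      using V_large by argo
    then show ?thesis
      by (simp only: of_int_add of_int_of_nat_eq)
  qed
qed

end

lemma finite_pos_lower_bound:
  fixes f :: "'i::finite \<Rightarrow> real"
  assumes "\<And>i. f i > 0"
  shows "\<exists>\<mu>>0. \<forall>i. \<mu> \<le> f i"
  using assms by (intro exI[of _ "Min (range f)"]) auto

lemma exists_nat_div_le:
  fixes a b :: real
  assumes "0 \<le> a" and "0 < b"
  shows "\<exists>N::nat. N > 0 \<and> a / real N \<le> b"
proof -
  obtain N :: nat where N: "a / b < real N"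
    using reals_Archimedean2 by blast
  moreover have "0 \<le> a / b"
    using assms by simp
  ultimately have "N > 0"
    by (cases N) auto
  with N show ?thesis
    using assms by (intro exI[of _ N]) (simp add: field_simps)
qed

lemma scaled_tendsto_eventually_ge:
  fixes V :: "nat \<Rightarrow> real" and X :: "nat \<Rightarrow> nat"
  assumes V_pos: "\<And>n. V n > 0" and X_lim: "(\<lambda>n. real (X n) / V n) \<longlonglongrightarrow> x" and "\<epsilon> > 0"
  shows "eventually (\<lambda>n. V n * (x - \<epsilon>) \<le> real (X n)) sequentially"
proof -
  have "eventually (\<lambda>n. x - \<epsilon> < real (X n) / V n) sequentially"
    by (intro order_tendstoD(1)[OF X_lim]) (use \<open>\<epsilon> > 0\<close> in linarith)
  then show ?thesis
    by eventually_elim (use V_pos in \<open>simp add: pos_less_divide_eq mult.commute\<close>)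
qed

lemma scaled_tendsto_at_top:
  fixes V :: "nat \<Rightarrow> real" and X :: "nat \<Rightarrow> nat"
  assumes V_pos: "\<And>n. V n > 0" and V_lim: "filterlim V at_top sequentially"
    and X_lim: "(\<lambda>n. real (X n) / V n) \<longlonglongrightarrow> x" and "x > 0"
  shows "filterlim (\<lambda>n. real (X n)) at_top sequentially"
proof -
  have "filterlim (\<lambda>n. real (X n) / V n * V n) at_top sequentially"
    using X_lim \<open>x > 0\<close> V_lim by (rule filterlim_tendsto_pos_mult_at_top)
  then show ?thesis
    using V_pos by (simp add: less_imp_neq[symmetric])
qed

lemma exists_nat_states_tendsto:
  fixes V :: "nat \<Rightarrow> real" and W :: "nat \<Rightarrow> 'i \<Rightarrow> int"
  assumes W_in: "eventually (\<lambda>n. W n \<in> (\<lambda>x i. int (x i)) ` G n) sequentially"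
    and W_lim: "\<And>i. (\<lambda>n. real_of_int (W n i) / V n) \<longlonglongrightarrow> c i"
  shows "\<exists>Y. eventually (\<lambda>n. Y n \<in> G n) sequentially \<and> (\<forall>i. (\<lambda>n. real (Y n i) / V n) \<longlonglongrightarrow> c i)"
proof (intro exI[of _ "\<lambda>n i. nat (W n i)"] conjI allI)
  have W_nat: "eventually (\<lambda>n. (\<lambda>i. nat (W n i)) \<in> G n \<and> (\<forall>i. real (nat (W n i)) = real_of_int (W n i)))
      sequentially"
    using W_in by eventually_elim auto
  then show "eventually (\<lambda>n. (\<lambda>i. nat (W n i)) \<in> G n) sequentially"
    by (auto elim: eventually_mono)
  show "(\<lambda>n. real (nat (W n i)) / V n) \<longlonglongrightarrow> c i" for i
    using W_lim[of i] by (rule Lim_transform_eventually) (use W_nat in \<open>auto elim: eventually_mono\<close>)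
qed

lemma floor_combination_tendsto:
  fixes V :: "nat \<Rightarrow> real" and X :: "nat \<Rightarrow> nat" and r :: "nat \<Rightarrow> int"
  assumes V_pos: "\<And>n. V n > 0" and V_lim: "filterlim V at_top sequentially"
    and X_lim: "(\<lambda>n. real (X n) / V n) \<longlonglongrightarrow> x"
  shows "(\<lambda>n. real_of_int (int (X n) + (\<Sum>k<m. \<lfloor>V n * \<alpha> k\<rfloor> * r k)) / V n)
    \<longlonglongrightarrow> x + (\<Sum>k<m. \<alpha> k * real_of_int (r k))"
proof -
  have "(\<lambda>n. real (X n) / V n + (\<Sum>k<m. real_of_int \<lfloor>V n * \<alpha> k\<rfloor> / V n * real_of_int (r k)))
      \<longlonglongrightarrow> x + (\<Sum>k<m. \<alpha> k * real_of_int (r k))"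
    by (intro tendsto_intros X_lim floor_mult_div_tendsto[OF V_pos V_lim])
  then show ?thesis
    by (simp add: add_divide_distrib sum_divide_distrib)
qed

lemma exists_component_states_tendsto:
  fixes nu nu' :: "nat \<Rightarrow> 'i::finite \<Rightarrow> nat" and V :: "nat \<Rightarrow> real" and X :: "nat \<Rightarrow> 'i \<Rightarrow> nat"
    and xt c :: "'i \<Rightarrow> real" and Gamma :: "nat \<Rightarrow> ('i \<Rightarrow> nat) set"
  assumes kappa_pos: "\<And>k. k < m \<Longrightarrow> kappa k > 0"
    and V_pos: "\<And>n. V n > 0" and V_lim: "filterlim V at_top sequentially"
    and X_lim: "\<And>i. (\<lambda>n. real (X n i) / V n) \<longlonglongrightarrow> xt i"
    and xt_pos: "\<And>i. xt i > 0" and c_pos: "\<And>i. c i > 0"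
    and c_class: "(\<lambda>i. c i - xt i) \<in> stoich_subspace m nu nu'"
    and Gamma_comp: "\<And>n. closed_irreducible_component m nu nu' (scaled_rates nu kappa (V n)) (Gamma n)"
    and X_in_Gamma: "\<And>n. X n \<in> Gamma n"
  shows "\<exists>Y. eventually (\<lambda>n. Y n \<in> Gamma n) sequentially \<and> (\<forall>i. (\<lambda>n. real (Y n i) / V n) \<longlonglongrightarrow> c i)"
proof -
  let ?r = "reaction_vector nu nu'"
  have comp: "closed_component m nu nu' (scaled_rates nu kappa (V n)) (Gamma n)" for n
    using Gamma_comp[of n] kappa_pos V_pos[of n] by unfold_locales (simp_all add: scaled_rates_def)
  from c_class obtain \<alpha> where "\<forall>i. c i - xt i = (\<Sum>k<m. \<alpha> k * real_of_int (?r k i))"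
    unfolding stoich_subspace_eq by blast
  then have \<alpha>: "c i = xt i + (\<Sum>k<m. \<alpha> k * real_of_int (?r k i))" for i
    by (simp add: algebra_simps)
  from reaction_bounds_exist[of m nu nu'] obtain B R where "0 \<le> R" and nu_le: "\<And>k i. k < m \<Longrightarrow> nu k i \<le> B"
    and r_sum_le: "\<And>i. (\<Sum>k<m. \<bar>?r k i\<bar>) \<le> R"
    by blast
  obtain \<mu> where "\<mu> > 0" and \<mu>_le: "\<And>i. \<mu> \<le> xt i" "\<And>i. \<mu> \<le> c i"
    using finite_pos_lower_bound[of "\<lambda>i. min (xt i) (c i)"] xt_pos c_pos by auto
  \<comment> \<open>Some state \<open>X n0\<close> enables every reaction; this yields reversal combinations \<open>P\<close>,
    which depend only on the network and hence serve every component.\<close>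
  have "eventually (\<lambda>n. real B \<le> real (X n i)) sequentially" for i
    using scaled_tendsto_at_top[OF V_pos V_lim X_lim xt_pos] unfolding filterlim_at_top by blast
  then have "eventually (\<lambda>n. \<forall>i. real B \<le> real (X n i)) sequentially"
    by (rule eventually_all_finite)
  then obtain n0 where X_n0: "\<And>i. B \<le> X n0 i"
    using eventually_happens'[OF sequentially_bot] by auto
  have "nu k i \<le> X n0 i" if "k < m" for k i
    using nu_le[OF that] X_n0[of i] by (rule order_trans)
  then obtain P where reversal: "\<And>k i. k < m \<Longrightarrow> (\<Sum>j<m. int (P k j) * ?r j i) = - ?r k i"
    using closed_component.reaction_reversal_exists[OF comp X_in_Gamma[of n0]] by blast
  define D where "D = int (\<Sum>k<m. \<Sum>j<m. P k j) * R"
  have D: "int (\<Sum>j<m. P k j) * R \<le> D" if "k < m" for k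
    unfolding D_def using that \<open>0 \<le> R\<close> member_le_sum[of k "{..<m}" "\<lambda>k. \<Sum>j<m. P k j"]
    by (intro mult_right_mono) (simp_all del: of_nat_sum)
  obtain N where "N > 0" and N_large: "(\<Sum>k<m. \<bar>\<alpha> k\<bar>) * real_of_int R / real N \<le> \<mu> / 4"
    using exists_nat_div_le[of "(\<Sum>k<m. \<bar>\<alpha> k\<bar>) * real_of_int R" "\<mu> / 4"] \<open>\<mu> > 0\<close> \<open>0 \<le> R\<close>
    by (auto simp: sum_nonneg)
  define W where "W n i = int (X n i) + (\<Sum>k<m. \<lfloor>V n * \<alpha> k\<rfloor> * ?r k i)" for n i
  have "eventually (\<lambda>n. \<forall>i. V n * (xt i - \<mu> / 4) \<le> real (X n i)) sequentially"
    using \<open>\<mu> > 0\<close> by (intro eventually_all_finite scaled_tendsto_eventually_ge[OF V_pos X_lim]) simp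
  moreover have "eventually (\<lambda>n. 2 * (real B + real_of_int D + real m * real_of_int R + real_of_int R) / \<mu> \<le> V n)
      sequentially"
    using V_lim by (simp add: filterlim_at_top)
  ultimately have "eventually (\<lambda>n. W n \<in> (\<lambda>x i. int (x i)) ` Gamma n) sequentially"
  proof eventually_elim
    case (elim n)
    then show ?case
      unfolding W_def using \<open>\<mu> > 0\<close>
      by (intro closed_component.fire_along_segment[OF comp nu_le r_sum_le reversal D \<mu>_le \<alpha> \<open>N > 0\<close> N_large
          V_pos _ X_in_Gamma]) (auto simp: pos_divide_le_eq mult.commute)
  qed
  moreover have "(\<lambda>n. real_of_int (W n i) / V n) \<longlonglongrightarrow> c i" for i
    unfolding W_def \<alpha>[of i] by (rule floor_combination_tendsto[OF V_pos V_lim X_lim])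
  ultimately show ?thesis
    by (rule exists_nat_states_tendsto)
qed

section \<open>The relative entropy as a Lyapunov function\<close>

lemma lyap_term_nonneg:
  fixes x c :: real
  assumes "x > 0" and "c > 0"
  shows "x * (ln x - ln c - 1) + c \<ge> 0"
    and "x * (ln x - ln c - 1) + c = 0 \<longleftrightarrow> x = c"
proof -
  define u where "u = c / x"
  have "u > 0"
    using assms by (simp add: u_def)
  have term_eq: "x * (ln x - ln c - 1) + c = x * (u - 1 - ln u)"
    using assms by (simp add: u_def ln_div field_simps)
  have "ln u \<le> u - 1"
    using \<open>u > 0\<close> by (rule ln_le_minus_one)
  then show "x * (ln x - ln c - 1) + c \<ge> 0"
    unfolding term_eq using assms by simp
  have "u - 1 - ln u = 0 \<longleftrightarrow> u = 1"
    using ln_eq_minus_one[OF \<open>u > 0\<close>] by auto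
  then show "x * (ln x - ln c - 1) + c = 0 \<longleftrightarrow> x = c"
    unfolding term_eq using assms by (auto simp: u_def)
qed

lemma lyap_pos:
  fixes x c :: "'i::finite \<Rightarrow> real"
  assumes "\<And>i. x i > 0" and "\<And>i. c i > 0" and "x \<noteq> c"
  shows "lyap c x > 0"
proof -
  from \<open>x \<noteq> c\<close> obtain j where "x j \<noteq> c j"
    by auto
  then show ?thesis
    unfolding lyap_def using lyap_term_nonneg[OF assms(1,2)]
    by (intro sum_pos2[where i = j]) (auto simp: order_less_le)
qed

lemma grad_lyap:
  fixes x c :: "'i::finite \<Rightarrow> real"
  assumes "\<And>i. x i > 0"
  shows "grad (lyap c) x i = ln (x i) - ln (c i)"
proof -
  have "((\<lambda>t. (x(i := t)) j * (ln ((x(i := t)) j) - ln (c j) - 1) + c j) has_field_derivative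
      (if j = i then ln (x i) - ln (c i) else 0)) (at (x i))" for j
  proof (cases "j = i")
    case True
    have "((\<lambda>t. t * (ln t - ln (c i) - 1) + c i) has_field_derivative
        1 * (ln (x i) - ln (c i) - 1) + x i * (1 / x i - 0 - 0) + 0) (at (x i))"
      using assms[of i] by (intro derivative_eq_intros) auto
    then show ?thesis
      using True assms[of i] by simp
  qed simp
  then have "((\<lambda>t. lyap c (x(i := t))) has_field_derivative ln (x i) - ln (c i)) (at (x i))"
    unfolding lyap_def using DERIV_sum[of UNIV] by fastforce
  then show ?thesis
    unfolding grad_def by (rule DERIV_imp_deriv)
qed

lemma monom_eq_exp:
  assumes "\<And>i. x i > 0" and "\<And>i. c i > 0"
  shows "monom x v = monom c v * exp (\<Sum>i\<in>UNIV. real (v i) * (ln (x i) - ln (c i)))"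
proof -
  have "x i ^ v i = c i ^ v i * exp (real (v i) * (ln (x i) - ln (c i)))" for i
  proof -
    have "x i = c i * exp (ln (x i) - ln (c i))"
      using assms[of i] by (simp add: exp_diff)
    then show ?thesis
      by (metis exp_of_nat_mult power_mult_distrib)
  qed
  then show ?thesis
    unfolding monom_def by (simp add: prod.distrib exp_sum)
qed

lemma exp_tangent_le: "exp (a::real) * (b - a) \<le> exp b - exp a"
  using exp_ge_add_one_self[of "b - a"] by (simp add: exp_diff field_simps)

lemma exp_tangent_eq_iff: "exp (a::real) * (b - a) = exp b - exp a \<longleftrightarrow> a = b"
proof
  assume "exp a * (b - a) = exp b - exp a"
  then have "exp (b - a) = 1 + (b - a)"
    by (simp add: exp_diff field_simps)
  then have "ln (exp (b - a)) = exp (b - a) - 1"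
    unfolding ln_exp by linarith
  then have "exp (b - a) = 1"
    by (intro ln_eq_minus_one) simp_all
  then show "a = b"
    by simp
qed simp

lemma complex_balanced_sum:
  assumes "complex_balanced m nu nu' kappa c"
  shows "(\<Sum>k<m. kappa k * monom c (nu k) * g (nu' k)) = (\<Sum>k<m. kappa k * monom c (nu k) * g (nu k))"
proof -
  define T where "T = nu ` {..<m} \<union> nu' ` {..<m}"
  define w where "w k = kappa k * monom c (nu k)" for k
  have "finite T"
    by (simp add: T_def)
  have "(\<Sum>k<m. w k * g (nu' k)) = (\<Sum>z\<in>T. \<Sum>k\<in>{k\<in>{..<m}. nu' k = z}. w k * g (nu' k))"
    by (rule sum.group[symmetric]) (auto simp: \<open>finite T\<close> T_def)
  also have "\<dots> = (\<Sum>z\<in>T. g z * (\<Sum>k\<in>{k. k < m \<and> nu' k = z}. w k))"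
    by (auto simp: sum_distrib_left mult.commute intro!: sum.cong)
  also have "\<dots> = (\<Sum>z\<in>T. g z * (\<Sum>k\<in>{k. k < m \<and> nu k = z}. w k))"
    using assms by (simp add: complex_balanced_def w_def)
  also have "\<dots> = (\<Sum>z\<in>T. \<Sum>k\<in>{k\<in>{..<m}. nu k = z}. w k * g (nu k))"
    by (auto simp: sum_distrib_left mult.commute intro!: sum.cong)
  also have "\<dots> = (\<Sum>k<m. w k * g (nu k))"
    by (rule sum.group) (auto simp: \<open>finite T\<close> T_def)
  finally show ?thesis
    by (simp add: w_def)
qed

lemma lyap_dissipation_eq:
  fixes x c :: "'i::finite \<Rightarrow> real"
  assumes x_pos: "\<And>i. x i > 0" and c_pos: "\<And>i. c i > 0"
  defines "a v \<equiv> \<Sum>i\<in>UNIV. real (v i) * (ln (x i) - ln (c i))"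
  shows "(\<Sum>i\<in>UNIV. grad (lyap c) x i * mass_action_field m nu nu' kappa x i)
    = (\<Sum>k<m. kappa k * monom c (nu k) * (exp (a (nu k)) * (a (nu' k) - a (nu k))))"
proof -
  have "(\<Sum>i\<in>UNIV. grad (lyap c) x i * mass_action_field m nu nu' kappa x i)
      = (\<Sum>i\<in>UNIV. \<Sum>k<m. (ln (x i) - ln (c i)) * (kappa k * monom x (nu k) * (real (nu' k i) - real (nu k i))))"
    by (simp add: mass_action_field_def grad_lyap[of x, OF x_pos] sum_distrib_left)
  also have "\<dots> = (\<Sum>k<m. kappa k * monom x (nu k) * (a (nu' k) - a (nu k)))"
  proof -
    have "a (nu' k) - a (nu k) = (\<Sum>i\<in>UNIV. (ln (x i) - ln (c i)) * (real (nu' k i) - real (nu k i)))" for k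
      unfolding a_def sum_subtractf[symmetric] by (intro sum.cong) (auto simp: algebra_simps)
    then show ?thesis
      by (subst sum.swap) (simp add: sum_distrib_left mult_ac)
  qed
  also have "\<dots> = (\<Sum>k<m. kappa k * monom c (nu k) * (exp (a (nu k)) * (a (nu' k) - a (nu k))))"
    using monom_eq_exp[of x c] x_pos c_pos by (simp add: a_def mult_ac)
  finally show ?thesis .
qed

lemma lyap_dissipation_nonpos:
  fixes x c :: "'i::finite \<Rightarrow> real"
  assumes x_pos: "\<And>i. x i > 0" and c_pos: "\<And>i. c i > 0"
    and kappa_pos: "\<And>k. k < m \<Longrightarrow> kappa k > 0" and cb: "complex_balanced m nu nu' kappa c"
  shows "(\<Sum>i\<in>UNIV. grad (lyap c) x i * mass_action_field m nu nu' kappa x i) \<le> 0"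
    and "(\<Sum>i\<in>UNIV. grad (lyap c) x i * mass_action_field m nu nu' kappa x i) = 0 \<Longrightarrow>
      \<forall>k<m. (\<Sum>i\<in>UNIV. real (nu k i) * (ln (x i) - ln (c i))) =
        (\<Sum>i\<in>UNIV. real (nu' k i) * (ln (x i) - ln (c i)))"
proof -
  define a where "a v = (\<Sum>i\<in>UNIV. real (v i) * (ln (x i) - ln (c i)))" for v :: "'i \<Rightarrow> nat"
  define w where "w k = kappa k * monom c (nu k)" for k
  define gap where "gap k = w k * (exp (a (nu' k)) - exp (a (nu k)) - exp (a (nu k)) * (a (nu' k) - a (nu k)))" for k
  have w_pos: "w k > 0" if "k < m" for k
    unfolding w_def monom_def using kappa_pos[OF that] c_pos by (simp add: prod_pos)
  have gap_nonneg: "gap k \<ge> 0" if "k < m" for k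
    unfolding gap_def using w_pos[OF that] exp_tangent_le by simp
  \<comment> \<open>Complex balance makes the sum of the chord terms vanish, so the dissipation is minus the
    sum of the gaps.\<close>
  have "(\<Sum>k<m. w k * exp (a (nu' k))) = (\<Sum>k<m. w k * exp (a (nu k)))"
    unfolding w_def by (rule complex_balanced_sum[OF cb])
  then have dissipation: "(\<Sum>i\<in>UNIV. grad (lyap c) x i * mass_action_field m nu nu' kappa x i) = - (\<Sum>k<m. gap k)"
    unfolding lyap_dissipation_eq[of x c, OF x_pos c_pos] gap_def
    by (simp add: a_def w_def sum_subtractf right_diff_distrib mult.assoc)
  then show "(\<Sum>i\<in>UNIV. grad (lyap c) x i * mass_action_field m nu nu' kappa x i) \<le> 0"
    using sum_nonneg[of "{..<m}" gap] gap_nonneg by simp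
  assume "(\<Sum>i\<in>UNIV. grad (lyap c) x i * mass_action_field m nu nu' kappa x i) = 0"
  then have "\<forall>k\<in>{..<m}. gap k = 0"
    using dissipation sum_nonneg_eq_0_iff[of "{..<m}" gap] gap_nonneg by simp
  then show "\<forall>k<m. a (nu k) = a (nu' k)"
    using w_pos exp_tangent_eq_iff by (force simp: gap_def)
qed

lemma eq_if_log_ratio_orthogonal:
  fixes x c :: "'i::finite \<Rightarrow> real"
  assumes x_pos: "\<And>i. x i > 0" and c_pos: "\<And>i. c i > 0"
    and x_class: "(\<lambda>i. x i - c i) \<in> stoich_subspace m nu nu'"
    and orth: "\<forall>k<m. (\<Sum>i\<in>UNIV. real (nu k i) * (ln (x i) - ln (c i))) =
      (\<Sum>i\<in>UNIV. real (nu' k i) * (ln (x i) - ln (c i)))"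
  shows "x = c"
proof -
  define \<mu> where "\<mu> i = ln (x i) - ln (c i)" for i
  from x_class obtain \<beta> where \<beta>: "\<And>i. x i - c i = (\<Sum>k<m. \<beta> k * (real (nu' k i) - real (nu k i)))"
    unfolding stoich_subspace_eq by (auto simp: reaction_vector_def)
  have "(\<Sum>i\<in>UNIV. \<mu> i * (x i - c i))
      = (\<Sum>k<m. \<beta> k * ((\<Sum>i\<in>UNIV. real (nu' k i) * \<mu> i) - (\<Sum>i\<in>UNIV. real (nu k i) * \<mu> i)))"
    unfolding \<beta> sum_distrib_left sum_subtractf[symmetric]
    by (subst sum.swap) (auto intro!: sum.cong simp: algebra_simps)
  also have "\<dots> = 0"
    using orth by (simp add: \<mu>_def)
  finally have sum_zero: "(\<Sum>i\<in>UNIV. \<mu> i * (x i - c i)) = 0" .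
  have "\<mu> i * (x i - c i) \<ge> 0" for i
    using x_pos[of i] c_pos[of i]
    by (cases "x i \<le> c i") (auto simp: \<mu>_def mult_nonpos_nonpos)
  then have "\<mu> i * (x i - c i) = 0" for i
    using sum_zero sum_nonneg_eq_0_iff[of UNIV "\<lambda>i. \<mu> i * (x i - c i)"] by simp
  then show "x = c"
    using x_pos c_pos by (auto simp: fun_eq_iff \<mu>_def)
qed

lemma lyap_dissipation_eq_0_iff:
  fixes x c :: "'i::finite \<Rightarrow> real"
  assumes x_pos: "\<And>i. x i > 0" and c_pos: "\<And>i. c i > 0"
    and kappa_pos: "\<And>k. k < m \<Longrightarrow> kappa k > 0" and cb: "complex_balanced m nu nu' kappa c"
    and x_class: "(\<lambda>i. x i - c i) \<in> stoich_subspace m nu nu'"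
  shows "(\<Sum>i\<in>UNIV. grad (lyap c) x i * mass_action_field m nu nu' kappa x i) = 0 \<longleftrightarrow> x = c"
proof
  assume "(\<Sum>i\<in>UNIV. grad (lyap c) x i * mass_action_field m nu nu' kappa x i) = 0"
  then show "x = c"
    using eq_if_log_ratio_orthogonal[of x c, OF x_pos c_pos x_class]
      lyap_dissipation_nonpos(2)[of x c, OF x_pos c_pos kappa_pos cb]
    by blast
next
  assume "x = c"
  then show "(\<Sum>i\<in>UNIV. grad (lyap c) x i * mass_action_field m nu nu' kappa x i) = 0"
    using grad_lyap[of x c] x_pos by simp
qed

theorem theorem3p1:
  fixes m :: nat
    and nu nu' :: "nat \<Rightarrow> 'i::finite \<Rightarrow> nat"
    and kappa :: "nat \<Rightarrow> real"
    and V :: "nat \<Rightarrow> real"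
    and X :: "nat \<Rightarrow> 'i \<Rightarrow> nat"
    and xt c :: "'i \<Rightarrow> real"
    and Gamma :: "nat \<Rightarrow> ('i \<Rightarrow> nat) set"
  assumes reactions: "\<And>k. k < m \<Longrightarrow> nu k \<noteq> nu' k"
    and kappa_pos: "\<And>k. k < m \<Longrightarrow> kappa k > 0"
    and cb_system: "\<exists>c0. (\<forall>i. c0 i > 0) \<and> complex_balanced m nu nu' kappa c0"
    and V_pos: "\<And>n. V n > 0"
    and V_mono: "strict_mono V"
    and V_lim: "filterlim V at_top sequentially"
    and X_lim: "\<And>i. (\<lambda>n. real (X n i) / V n) \<longlonglongrightarrow> xt i"
    and xt_pos: "\<And>i. xt i > 0"
    and c_pos: "\<And>i. c i > 0"
    and c_class: "(\<lambda>i. c i - xt i) \<in> stoich_subspace m nu nu'"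
    and c_cb: "complex_balanced m nu nu' kappa c"
    and Gamma_comp: "\<And>n. closed_irreducible_component m nu nu' (scaled_rates nu kappa (V n)) (Gamma n)"
    and X_in_Gamma: "\<And>n. X n \<in> Gamma n"
  shows
    "((\<lambda>n. - (1 / V n) * ln (prod_poisson c (V n) (X n))) \<longlonglongrightarrow> lyap c xt)
     \<and> ((\<lambda>n. (1 / V n) * ln (infsum (prod_poisson c (V n)) (Gamma n))) \<longlonglongrightarrow> 0)
     \<and> ((\<lambda>n. - (1 / V n) * ln (prod_poisson c (V n) (X n) / infsum (prod_poisson c (V n)) (Gamma n)))
          \<longlonglongrightarrow> lyap c xt)
     \<and> lyap c c = 0
     \<and> (\<forall>x. (\<forall>i. x i > 0) \<and> (\<lambda>i. x i - c i) \<in> stoich_subspace m nu nu' \<and> x \<noteq> c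
            \<longrightarrow> lyap c x > 0)
     \<and> (\<forall>x. (\<forall>i. x i > 0) \<and> (\<lambda>i. x i - c i) \<in> stoich_subspace m nu nu'
            \<longrightarrow> (\<Sum>i\<in>UNIV. grad (lyap c) x i * mass_action_field m nu nu' kappa x i) \<le> 0
              \<and> ((\<Sum>i\<in>UNIV. grad (lyap c) x i * mass_action_field m nu nu' kappa x i) = 0
                   \<longleftrightarrow> x = c))"
proof -
  obtain Y where "eventually (\<lambda>n. Y n \<in> Gamma n) sequentially" and "\<And>i. (\<lambda>n. real (Y n i) / V n) \<longlonglongrightarrow> c i"
    using exists_component_states_tendsto[OF kappa_pos V_pos V_lim X_lim xt_pos c_pos c_class Gamma_comp X_in_Gamma]
    by blast
  then have mass_lim: "(\<lambda>n. 1 / V n * ln (infsum (prod_poisson c (V n)) (Gamma n))) \<longlonglongrightarrow> 0"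
    by (rule infsum_prod_poisson_log_limit[OF V_pos V_lim c_pos])
  have weight_lim: "(\<lambda>n. - (1 / V n) * ln (prod_poisson c (V n) (X n))) \<longlonglongrightarrow> lyap c xt"
    by (rule prod_poisson_log_limit[OF V_pos V_lim X_lim xt_pos c_pos])
  then have "(\<lambda>n. - (1 / V n) * ln (prod_poisson c (V n) (X n) / infsum (prod_poisson c (V n)) (Gamma n)))
      \<longlonglongrightarrow> lyap c xt"
    using tendsto_add[OF weight_lim mass_lim]
    by (simp add: ln_prod_poisson_div_infsum[OF X_in_Gamma V_pos c_pos] diff_divide_distrib)
  moreover have "lyap c x > 0" if "\<forall>i. x i > 0" and "x \<noteq> c" for x
    using lyap_pos[of x c] that c_pos by blast
  moreover have "(\<Sum>i\<in>UNIV. grad (lyap c) x i * mass_action_field m nu nu' kappa x i) \<le> 0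
      \<and> ((\<Sum>i\<in>UNIV. grad (lyap c) x i * mass_action_field m nu nu' kappa x i) = 0 \<longleftrightarrow> x = c)"
    if "\<forall>i. x i > 0" and "(\<lambda>i. x i - c i) \<in> stoich_subspace m nu nu'" for x
    using lyap_dissipation_nonpos(1)[of x c, OF _ c_pos kappa_pos c_cb]
      lyap_dissipation_eq_0_iff[of x c, OF _ c_pos kappa_pos c_cb] that by blast
  ultimately show ?thesis
    using weight_lim mass_lim by simp
qed

end
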